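(* Let $\Phi(z)=\frac{2z}{1+|z|^2}$. For $(\omega,s)\in\mathbb S^1\times(-1,1)$, let $\alpha\in(-\pi/2,\pi/2)$ and $\beta\in\mathbb S^1$ be determined by $\cos\alpha=\frac{1-s^2}{1+s^2}$, $\sin\alpha=\frac{-2s}{1+s^2}$, $\omega+\frac\pi2=\beta+\alpha+\pi$, and let $u(t)=\frac{1-s^2}{1+s^2}\tanh t$. Then $$\Phi(\gamma^{\mathrm v}_{\omega,s}(t))=\gamma^E_{\beta,\alpha}(u(t)),\quad t\in\mathbb R,\qquad\text{and}\qquad\frac{du}{dt}=\frac{1+s^2}{1-s^2}\,x^2(\gamma^{\mathrm v}_{\omega,s}(t)).$$ Moreover, in horocyclic coordinates, for $(\beta,a)\in\mathbb S^1\times\mathbb R$ and $t_0=-\log\sqrt{1+a^2}$, $$\Phi(\gamma_{\beta,a}(t+t_0))=\gamma^E_{\beta,\tan^{-1}a}\big(u(t)\big),\qquad u(t)=(1+a^2)^{-1/2}\tanh t.$$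
   Context: $x(z)=\frac{1-|z|^2}{1+|z|^2}$. Vertex parameterization of hyperbolic geodesics (Poincaré metric $\frac{4|dz|^2}{(1-|z|^2)^2}$ on the open unit disk): $\gamma^{\mathrm v}_{\omega,s}(t)=e^{i\omega}\frac{s+i\tanh(t/2)}{1+is\tanh(t/2)}$. Horocyclic parameterization: $\gamma_{\beta,a}(t)=e^{i\beta}\frac{(2+ia)\tanh(t/2)+ia}{ia\tanh(t/2)-2+ia}$. Euclidean geodesics (lines) in fan-beam coordinates: $\gamma^E_{\beta,\alpha}(u)=e^{i(\beta+\alpha+\pi)}(u+i\sin\alpha)$, $u\in[-\cos\alpha,\cos\alpha]$. *)

theory Defs
  imports "HOL-Analysis.Analysis"
begin

definition xfun :: "complex \<Rightarrow> real" where
  "xfun z = (1 - (cmod z)^2) / (1 + (cmod z)^2)"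

definition Phi :: "complex \<Rightarrow> complex" where
  "Phi z = 2 * z / complex_of_real (1 + (cmod z)^2)"

definition gamma_v :: "real \<Rightarrow> real \<Rightarrow> real \<Rightarrow> complex" where
  "gamma_v \<omega> s t = cis \<omega> * (complex_of_real s + \<i> * complex_of_real (tanh (t/2)))
      / (1 + \<i> * complex_of_real s * complex_of_real (tanh (t/2)))"

definition gamma_h :: "real \<Rightarrow> real \<Rightarrow> real \<Rightarrow> complex" where
  "gamma_h \<beta> a t = cis \<beta> * ((2 + \<i> * complex_of_real a) * complex_of_real (tanh (t/2)) + \<i> * complex_of_real a)
      / (\<i> * complex_of_real a * complex_of_real (tanh (t/2)) - 2 + \<i> * complex_of_real a)"

definition gamma_E :: "real \<Rightarrow> real \<Rightarrow> real \<Rightarrow> complex" where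
  "gamma_E \<beta> \<alpha> u = cis (\<beta> + \<alpha> + pi) * (complex_of_real u + \<i> * complex_of_real (sin \<alpha>))"

end

theory Submission
  imports Defs
begin

text \<open>
  Phi commutes with rotations, and for a quotient Phi (z / w) = 2 z cnj w / (|z|^2 + |w|^2).
  With tau = tanh (t/2) the vertex geodesic is a rotated quotient of this kind, and the double
  angle formula tanh t = 2 tau / (1 + tau^2) turns Phi of it into
  cis (omega + pi/2) * (c tanh t - i (2s / (1 + s^2))), c = (1 - s^2) / (1 + s^2), which is the
  line gamma_E at u = c tanh t. The speed identity needs no further computation:
  x(z)^2 = 1 - |Phi z|^2 and c^2 + (2s / (1 + s^2))^2 = 1 give x^2 = c^2 (1 - tanh^2 t) = c u'(t).

  For the horocyclic parameterization write tanh (x/2) through e^x: then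
  gamma_h beta a x = cis beta * (1 - (1 + i a) e^x) / (1 + (1 - i a) e^x). The shift by
  t0 = - ln (sqrt (1 + a^2)) turns (1 + i a) e^x into z = cis (arctan a) e^t, and
  Phi ((1 - z) / (1 + cnj z)) = (1 - z^2) / (1 + |z|^2) is the line gamma_E with
  alpha = arctan a at u = cos alpha tanh t.
\<close>

lemma Phi_cis_mult: "Phi (cis b * z) = cis b * Phi z"
  by (simp add: Phi_def norm_mult)

lemma Phi_divide:
  assumes "w \<noteq> 0"
  shows "Phi (z / w) = 2 * z * cnj w / complex_of_real ((cmod z)\<^sup>2 + (cmod w)\<^sup>2)"
proof -
  have ww: "complex_of_real ((cmod w)\<^sup>2) = w * cnj w"
    by (metis complex_norm_square)
  have "Phi (z / w) = 2 * (z / w) / complex_of_real (1 + (cmod z)\<^sup>2 / (cmod w)\<^sup>2)"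
    by (simp add: Phi_def norm_divide power_divide)
  also have "complex_of_real (1 + (cmod z)\<^sup>2 / (cmod w)\<^sup>2)
      = complex_of_real ((cmod z)\<^sup>2 + (cmod w)\<^sup>2) / (w * cnj w)"
    using assms by (simp add: ww[symmetric] field_simps)
  finally show ?thesis
    using assms by (simp add: field_simps)
qed

(* No hypothesis needed: at z = -1 both sides are 0, since division by 0 gives 0. *)
lemma Phi_one_minus_div_cnj:
  "Phi ((1 - z) / (1 + cnj z)) = (1 - z\<^sup>2) / complex_of_real (1 + (cmod z)\<^sup>2)"
proof (cases "z = -1")
  case True
  then show ?thesis by (simp add: Phi_def)
next
  case False
  then have nonzero: "1 + cnj z \<noteq> 0"
    by (metis add_eq_0_iff complex_cnj_cnj complex_cnj_minus complex_cnj_one)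
  have norms: "(cmod (1 - z))\<^sup>2 + (cmod (1 + cnj z))\<^sup>2 = 2 * (1 + (cmod z)\<^sup>2)"
    by (simp add: cmod_power2) (simp add: algebra_simps power2_eq_square)
  have numerator: "2 * (1 - z) * cnj (1 + cnj z) = 2 * (1 - z\<^sup>2)"
    by (simp add: algebra_simps power2_eq_square)
  show ?thesis
    unfolding Phi_divide[OF nonzero] norms numerator of_real_mult of_real_numeral
    by (rule mult_divide_mult_cancel_left) simp
qed

lemma xfun_power2: "(xfun z)\<^sup>2 = 1 - (cmod (Phi z))\<^sup>2"
proof -
  have pos: "1 + (cmod z)\<^sup>2 > 0" by (simp add: add_pos_nonneg)
  then have norm_Phi: "cmod (Phi z) = 2 * cmod z / (1 + (cmod z)\<^sup>2)"
    unfolding Phi_def norm_divide norm_mult norm_of_real by simp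
  show ?thesis
    using pos unfolding xfun_def norm_Phi by (simp add: field_simps) (simp add: power2_eq_square algebra_simps)
qed

lemma tanh_double_half: "tanh (t::real) = 2 * tanh (t/2) / (1 + (tanh (t/2))\<^sup>2)"
  using tanh_add[of "t/2" "t/2"] by (simp add: power2_eq_square)

lemma tanh_half_exp: "tanh (x/2::real) = (exp x - 1) / (exp x + 1)"
  by (simp add: tanh_real_altdef exp_minus divide_simps add_pos_pos)

lemma cos_arctan_powr: "cos (arctan a) = (1 + a\<^sup>2) powr (-1/2)"
proof -
  have "(1 + a\<^sup>2) powr (1/2) = sqrt (1 + a\<^sup>2)"
    by (rule powr_half_sqrt) (simp add: add_nonneg_nonneg)
  then have "(1 + a\<^sup>2) powr (- (1/2)) = 1 / sqrt (1 + a\<^sup>2)"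
    by (simp only: powr_minus_divide)
  then show ?thesis
    by (simp add: cos_arctan)
qed

lemma Phi_gamma_v:
  "Phi (gamma_v \<omega> s t) = cis (\<omega> + pi/2)
     * (complex_of_real ((1 - s\<^sup>2) / (1 + s\<^sup>2) * tanh t) - \<i> * complex_of_real (2 * s / (1 + s\<^sup>2)))"
proof -
  define \<tau> where "\<tau> = tanh (t/2)"
  define N where "N = complex_of_real s + \<i> * complex_of_real \<tau>"
  define D where "D = 1 + \<i> * complex_of_real s * complex_of_real \<tau>"
  have "D \<noteq> 0" by (simp add: D_def complex_eq_iff)
  have pos: "1 + s\<^sup>2 > 0" "1 + \<tau>\<^sup>2 > 0" by (auto simp: add_pos_nonneg)
  have norms: "(cmod N)\<^sup>2 + (cmod D)\<^sup>2 = (1 + s\<^sup>2) * (1 + \<tau>\<^sup>2)"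
    by (simp add: N_def D_def cmod_power2 algebra_simps)
  have "2 * N * cnj D = complex_of_real (2 * s * (1 + \<tau>\<^sup>2)) + \<i> * complex_of_real (2 * \<tau> * (1 - s\<^sup>2))"
    by (simp add: N_def D_def complex_eq_iff algebra_simps power2_eq_square)
  then have Phi_quotient: "Phi (N / D)
      = \<i> * (complex_of_real ((1 - s\<^sup>2) / (1 + s\<^sup>2) * (2 * \<tau> / (1 + \<tau>\<^sup>2))) - \<i> * complex_of_real (2 * s / (1 + s\<^sup>2)))"
    unfolding Phi_divide[OF \<open>D \<noteq> 0\<close>] norms using pos
    by (simp add: complex_eq_iff)
  have "gamma_v \<omega> s t = cis \<omega> * (N / D)"
    by (simp add: gamma_v_def N_def D_def \<tau>_def)
  moreover have "cis (\<omega> + pi/2) = cis \<omega> * \<i>"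
    by (simp flip: cis_mult)
  moreover have "tanh t = 2 * \<tau> / (1 + \<tau>\<^sup>2)"
    unfolding \<tau>_def by (rule tanh_double_half)
  ultimately show ?thesis
    by (simp only: Phi_cis_mult Phi_quotient mult.assoc)
qed

lemma xfun_gamma_v_power2:
  "(xfun (gamma_v \<omega> s t))\<^sup>2 = ((1 - s\<^sup>2) / (1 + s\<^sup>2))\<^sup>2 * (1 - (tanh t)\<^sup>2)"
proof -
  define c d where "c = (1 - s\<^sup>2) / (1 + s\<^sup>2)" and "d = 2 * s / (1 + s\<^sup>2)"
  have "1 + s\<^sup>2 > 0" by (simp add: add_pos_nonneg)
  then have "c\<^sup>2 + d\<^sup>2 = 1"
    unfolding c_def d_def by (simp add: field_simps) (simp add: power2_eq_square algebra_simps)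
  moreover have "(cmod (Phi (gamma_v \<omega> s t)))\<^sup>2 = (c * tanh t)\<^sup>2 + d\<^sup>2"
    unfolding Phi_gamma_v c_def[symmetric] d_def[symmetric] norm_mult by (simp add: cmod_power2)
  ultimately show ?thesis
    unfolding xfun_power2 c_def[symmetric] by (simp add: algebra_simps)
qed

lemma Phi_gamma_v_eq_gamma_E:
  assumes "sin \<alpha> = -2 * s / (1 + s\<^sup>2)"
    and "cis (\<omega> + pi/2) = cis (\<beta> + \<alpha> + pi)"
  shows "Phi (gamma_v \<omega> s t) = gamma_E \<beta> \<alpha> ((1 - s\<^sup>2) / (1 + s\<^sup>2) * tanh t)"
  unfolding Phi_gamma_v gamma_E_def assms by simp

lemma has_real_derivative_tanh_xfun_gamma_v:
  assumes "-1 < s" "s < 1"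
  shows "((\<lambda>t. (1 - s\<^sup>2) / (1 + s\<^sup>2) * tanh t) has_real_derivative
      ((1 + s\<^sup>2) / (1 - s\<^sup>2) * (xfun (gamma_v \<omega> s t))\<^sup>2)) (at t)"
proof -
  define c where "c = (1 - s\<^sup>2) / (1 + s\<^sup>2)"
  have "s\<^sup>2 < 1"
    using assms by (simp add: abs_square_less_1 abs_less_iff)
  moreover have "1 + s\<^sup>2 > 0"
    by (simp add: add_pos_nonneg)
  ultimately have "c \<noteq> 0"
    by (simp add: c_def)
  have deriv: "((\<lambda>t. c * tanh t) has_real_derivative c * (1 - (tanh t)\<^sup>2)) (at t)"
    by (auto intro!: derivative_eq_intros)
  have "(1 + s\<^sup>2) / (1 - s\<^sup>2) = 1 / c"
    by (simp add: c_def)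
  then have "c * (1 - (tanh t)\<^sup>2) = (1 + s\<^sup>2) / (1 - s\<^sup>2) * (xfun (gamma_v \<omega> s t))\<^sup>2"
    unfolding xfun_gamma_v_power2 c_def[symmetric] using \<open>c \<noteq> 0\<close> by (simp add: power2_eq_square)
  then show ?thesis
    using deriv unfolding c_def by simp
qed

lemma gamma_h_exp:
  "gamma_h \<beta> a x = cis \<beta> * ((1 - (1 + \<i> * complex_of_real a) * complex_of_real (exp x))
     / (1 + (1 - \<i> * complex_of_real a) * complex_of_real (exp x)))"
proof -
  define y where "y = exp x"
  define k where "k = complex_of_real (-2 / (y + 1))"
  have "y > 0" by (simp add: y_def)
  then have "k \<noteq> 0" unfolding k_def of_real_eq_0_iff by simp
  have "(2 + \<i> * complex_of_real a) * complex_of_real ((y - 1) / (y + 1)) + \<i> * complex_of_real a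
      = k * (1 - (1 + \<i> * complex_of_real a) * complex_of_real y)"
    using \<open>y > 0\<close> by (simp add: k_def complex_eq_iff field_simps)
  moreover have "\<i> * complex_of_real a * complex_of_real ((y - 1) / (y + 1)) - 2 + \<i> * complex_of_real a
      = k * (1 + (1 - \<i> * complex_of_real a) * complex_of_real y)"
    using \<open>y > 0\<close> by (simp add: k_def complex_eq_iff field_simps)
  ultimately show ?thesis
    unfolding gamma_h_def tanh_half_exp y_def[symmetric] using \<open>k \<noteq> 0\<close> by simp
qed

lemma gamma_E_cos_tanh:
  "gamma_E \<beta> \<alpha> (cos \<alpha> * tanh t)
     = cis \<beta> * (1 - (cis \<alpha> * complex_of_real (exp t))\<^sup>2) / complex_of_real (1 + (exp t)\<^sup>2)"
proof -
  define y where "y = exp t"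
  define D where "D = complex_of_real (1 + y\<^sup>2)"
  have "1 + y\<^sup>2 > 0" by (simp add: add_pos_nonneg)
  have tanh_y: "tanh t = (y\<^sup>2 - 1) / (y\<^sup>2 + 1)"
    using tanh_half_exp[of "2 * t"] by (simp add: y_def power2_eq_square flip: exp_add)
  have "complex_of_real (cos \<alpha> * tanh t) + \<i> * complex_of_real (sin \<alpha>)
      = (cis \<alpha> * complex_of_real (y\<^sup>2) - cnj (cis \<alpha>)) / D"
    unfolding tanh_y D_def using \<open>1 + y\<^sup>2 > 0\<close> by (simp add: complex_eq_iff field_simps)
  moreover have "- cis \<alpha> * (cis \<alpha> * complex_of_real (y\<^sup>2) - cnj (cis \<alpha>)) = 1 - (cis \<alpha> * complex_of_real y)\<^sup>2"
    by (simp add: cis_cnj algebra_simps power2_eq_square cis_mult)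
  moreover have "cis (\<beta> + \<alpha> + pi) = cis \<beta> * - cis \<alpha>"
    by (simp flip: cis_mult)
  ultimately show ?thesis
    unfolding gamma_E_def y_def[symmetric] D_def[symmetric]
    by (simp only: mult.assoc times_divide_eq_right)
qed

lemma Phi_gamma_h_shift:
  "Phi (gamma_h \<beta> a (t - ln (sqrt (1 + a\<^sup>2)))) = gamma_E \<beta> (arctan a) (cos (arctan a) * tanh t)"
proof -
  define r where "r = sqrt (1 + a\<^sup>2)"
  define z where "z = cis (arctan a) * complex_of_real (exp t)"
  have "r > 0" by (simp add: r_def add_pos_nonneg)
  have "cis (arctan a) = (1 + \<i> * complex_of_real a) / complex_of_real r"
    by (simp add: complex_eq_iff cos_arctan sin_arctan r_def)
  then have shift: "(1 + \<i> * complex_of_real a) * complex_of_real (exp (t - ln r)) = z"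
    using \<open>r > 0\<close> by (simp add: z_def exp_diff)
  then have shift_cnj: "(1 - \<i> * complex_of_real a) * complex_of_real (exp (t - ln r)) = cnj z"
    by (metis complex_cnj_add complex_cnj_complex_of_real complex_cnj_i complex_cnj_mult
        complex_cnj_one mult_minus_left diff_conv_add_uminus)
  have "cmod z = exp t" by (simp add: z_def norm_mult)
  then have "Phi (gamma_h \<beta> a (t - ln r)) = cis \<beta> * ((1 - z\<^sup>2) / complex_of_real (1 + (exp t)\<^sup>2))"
    unfolding gamma_h_exp shift shift_cnj Phi_cis_mult Phi_one_minus_div_cnj by simp
  then show ?thesis
    unfolding r_def gamma_E_cos_tanh z_def by (simp only: times_divide_eq_right)
qed

theorem proposition3p11:
  fixes \<omega> s \<alpha> \<beta> :: real
  assumes "-1 < s" "s < 1"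
    and "-(pi/2) < \<alpha>" "\<alpha> < pi/2"
    and "cos \<alpha> = (1 - s^2) / (1 + s^2)"
    and "sin \<alpha> = -2 * s / (1 + s^2)"
    and "cis (\<omega> + pi/2) = cis (\<beta> + \<alpha> + pi)"
  shows "(\<forall>t::real. Phi (gamma_v \<omega> s t) = gamma_E \<beta> \<alpha> ((1 - s^2) / (1 + s^2) * tanh t))
       \<and> (\<forall>t::real. ((\<lambda>t. (1 - s^2) / (1 + s^2) * tanh t) has_real_derivative
              ((1 + s^2) / (1 - s^2) * (xfun (gamma_v \<omega> s t))^2)) (at t))
       \<and> (\<forall>(\<beta>'::real) (a::real). \<forall>t::real.
              Phi (gamma_h \<beta>' a (t + (- ln (sqrt (1 + a^2))))) =
              gamma_E \<beta>' (arctan a) ((1 + a^2) powr (-1/2) * tanh t))"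
  using Phi_gamma_v_eq_gamma_E[OF assms(6,7)] has_real_derivative_tanh_xfun_gamma_v[OF assms(1,2)]
    Phi_gamma_h_shift
  by (simp add: cos_arctan_powr)

end
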